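(* For every $\mathbf{x}\in\mathbb{R}^{n_t}$, the Fisher information matrix $\mathbf{J}(\mathbf{x})$ of the family of densities $p(y,\mathbf{h}\mid\mathbf{x})=\left(\prod_{i=1}^{n_t}\phi(h_i)\right)Q(-y\,\mathbf{h}^{\mathsf T}\mathbf{x})$, $y\in\{-1,1\}$, $\mathbf{h}\in\mathbb{R}^{n_t}$, with respect to the parameter $\mathbf{x}$ satisfies $$\det\mathbf{J}(\mathbf{x})=\zeta_0(\|\mathbf{x}\|)^{n_t-1}\zeta_2(\|\mathbf{x}\|).$$
   Context: $\phi(t)=\frac{1}{\sqrt{2\pi}}e^{-t^2/2}$, $Q(x)=\int_x^\infty\phi(t)dt$, $\xi(s):=\frac{\phi^2(s)}{Q(s)(1-Q(s))}$, and $\zeta_k(t):=\mathbb{E}[S^k\xi(tS)]$ for $t\in\mathbb{R}$, $k\in\mathbb{Z}$, $S\sim\mathcal{N}(0,1)$. The density is with respect to Lebesgue measure in $\mathbf{h}$ times counting measure in $y$; $\mathbf{J}(\mathbf{x})=\mathbb{E}_{y,\mathbf{h}\mid\mathbf{x}}[\nabla_{\mathbf{x}}\ln p(y,\mathbf{h}\mid\mathbf{x})\nabla_{\mathbf{x}}^{\mathsf T}\ln p(y,\mathbf{h}\mid\mathbf{x})]$. *)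

theory Defs
  imports "HOL-Analysis.Analysis"
begin

definition std_phi :: "real \<Rightarrow> real" where
  "std_phi t = exp (- (t\<^sup>2) / 2) / sqrt (2 * pi)"

definition Qfun :: "real \<Rightarrow> real" where
  "Qfun x = (LBINT t:{x..}. std_phi t)"

definition xi :: "real \<Rightarrow> real" where
  "xi s = (std_phi s)\<^sup>2 / (Qfun s * (1 - Qfun s))"

definition zeta :: "int \<Rightarrow> real \<Rightarrow> real" where
  "zeta k t = (LINT s|lborel. std_phi s * (s powi k) * xi (t * s))"

definition dens :: "real^'n \<Rightarrow> real \<Rightarrow> real^'n \<Rightarrow> real" where
  "dens x y h = (\<Prod>i\<in>UNIV. std_phi (h $ i)) * Qfun (- y * (h \<bullet> x))"

definition score :: "real^'n \<Rightarrow> real \<Rightarrow> real^'n \<Rightarrow> 'n \<Rightarrow> real" where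
  "score x y h i = deriv (\<lambda>t. ln (dens (x + t *\<^sub>R axis i 1) y h)) 0"

definition fisher :: "real^'n \<Rightarrow> real^'n^'n" where
  "fisher x = (\<chi> i j. LINT h|lborel.
      (\<Sum>y\<in>{-1, 1::real}. dens x y h * score x y h i * score x y h j))"

end

theory Submission
  imports Defs "HOL-Probability.Distributions"
begin

text \<open>
  Summing the squared score over \<open>y \<in> {-1, 1}\<close> and using \<open>Q(-s) = 1 - Q(s)\<close> gives
  \<open>J(x) = E[\<xi>(h\<^sup>T x) h h\<^sup>T]\<close> for a standard Gaussian vector \<open>h\<close>. If \<open>f\<close> is an orthogonal
  map preserving Lebesgue measure, the substitution \<open>h = f k\<close> gives \<open>J(f y) = M J(y) M\<^sup>T\<close>
  with \<open>M\<close> the matrix of \<open>f\<close>; choosing \<open>f\<close> with \<open>f(|x| e\<^sub>k) = x\<close> reduces the determinant to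
  the point \<open>|x| e\<^sub>k\<close>. There the integrand factors over the coordinates, and since odd
  Gaussian moments vanish, \<open>J\<close> is diagonal with entry \<open>\<zeta>\<^sub>2(|x|)\<close> at \<open>k\<close> and \<open>\<zeta>\<^sub>0(|x|)\<close>
  elsewhere.

  Invariance of Lebesgue measure under orthogonal maps is available in the library only for
  well-ordered index types, so the rotation is assembled from Givens rotations, each of which
  is a product of three shears; a shear translates one coordinate by an amount depending on the
  others and preserves Lebesgue measure by Fubini.
\<close>

section \<open>The standard normal density and its tail\<close>

lemma std_phi_eq_std_normal_density: "std_phi = std_normal_density"
  by (rule ext) (simp add: std_phi_def std_normal_density_def field_simps)

lemma std_phi_pos: "0 < std_phi t"
  by (simp add: std_phi_def)

lemma std_phi_minus [simp]: "std_phi (- t) = std_phi t"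
  by (simp add: std_phi_def)

lemma std_phi_measurable [measurable]: "std_phi \<in> borel_measurable borel"
  by (simp add: std_phi_eq_std_normal_density)

lemma integrable_std_phi: "integrable lborel std_phi"
  by (simp add: std_phi_eq_std_normal_density)

lemma integral_std_phi: "(LINT t|lborel. std_phi t) = 1"
  by (simp add: std_phi_eq_std_normal_density)

lemma continuous_on_std_phi: "continuous_on A std_phi"
  unfolding std_phi_def by (intro continuous_intros) auto

lemma std_phi_antimono:
  assumes "\<bar>t\<bar> \<le> a"
  shows "std_phi a \<le> std_phi t"
proof -
  have "t\<^sup>2 \<le> a\<^sup>2"
    using assms power_mono[of "\<bar>t\<bar>" a 2] by simp
  then show ?thesis
    unfolding std_phi_def by (intro divide_right_mono) auto
qed

lemma set_integrable_std_phi: "A \<in> sets lborel \<Longrightarrow> set_integrable lborel A std_phi"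
  unfolding set_integrable_def by (rule integrable_mult_indicator[OF _ integrable_std_phi])

lemma interval_lebesgue_integrable_std_phi: "interval_lebesgue_integrable lborel a b std_phi"
  by (simp add: interval_lebesgue_integrable_def set_integrable_std_phi)

lemma Qfun_eq_interval_integral: "Qfun u = (LBINT t=ereal u..\<infinity>. std_phi t)"
proof -
  have "Qfun u = (LBINT t:{u<..}. std_phi t)"
    unfolding Qfun_def by (rule set_integral_discrete_difference[where X="{u}"]) auto
  then show ?thesis
    by (simp add: interval_integral_Ioi)
qed

lemma Qfun_split: "Qfun a = (LBINT t=ereal a..ereal u. std_phi t) + Qfun u"
  using interval_integral_sum[OF interval_lebesgue_integrable_std_phi, of a u \<infinity>]
  by (simp add: Qfun_eq_interval_integral)

lemma Qfun_minus: "Qfun (- s) = 1 - Qfun s"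
proof -
  have "Qfun (- s) = (LBINT t=-\<infinity>..ereal s. std_phi t)"
    by (simp add: Qfun_eq_interval_integral interval_integral_reflect[of "ereal (- s)"])
  moreover have "(LBINT t=-\<infinity>..ereal s. std_phi t) + Qfun s = (LBINT t=-\<infinity>..\<infinity>. std_phi t)"
    unfolding Qfun_eq_interval_integral
    by (rule interval_integral_sum) (rule interval_lebesgue_integrable_std_phi)
  moreover have "(LBINT t=-\<infinity>..\<infinity>. std_phi t) = 1"
    by (simp add: interval_lebesgue_integral_def set_lebesgue_integral_def integral_std_phi)
  ultimately show ?thesis
    by linarith
qed

lemma has_real_derivative_Qfun: "(Qfun has_real_derivative - std_phi x) (at x)"
proof -
  have "((\<lambda>u. LBINT t=ereal (x - 1)..ereal u. std_phi t) has_vector_derivative std_phi x)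
      (at x within {x - 1..x + 1})"
    by (rule interval_integral_FTC2) (auto intro: continuous_on_std_phi)
  then have "((\<lambda>u. LBINT t=ereal (x - 1)..ereal u. std_phi t) has_real_derivative std_phi x) (at x)"
    by (simp add: at_within_Icc_at has_real_derivative_iff_has_vector_derivative)
  then have "((\<lambda>u. Qfun (x - 1) - (LBINT t=ereal (x - 1)..ereal u. std_phi t))
      has_real_derivative - std_phi x) (at x)"
    using DERIV_diff[OF DERIV_const] by fastforce
  moreover have "Qfun (x - 1) - (LBINT t=ereal (x - 1)..ereal u. std_phi t) = Qfun u" for u
    using Qfun_split[of "x - 1" u] by simp
  ultimately show ?thesis
    by simp
qed

lemma has_real_derivative_Qfun_comp [derivative_intros]:
  "(f has_real_derivative f') (at x within S) \<Longrightarrow>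
   ((\<lambda>x. Qfun (f x)) has_real_derivative - std_phi (f x) * f') (at x within S)"
  using DERIV_chain2[OF has_real_derivative_Qfun] by blast

lemma isCont_Qfun: "isCont Qfun x"
  using has_real_derivative_Qfun by (rule DERIV_isCont)

lemma Qfun_measurable [measurable]: "Qfun \<in> borel_measurable borel"
  by (intro borel_measurable_continuous_onI continuous_at_imp_continuous_on ballI isCont_Qfun)

lemma Qfun_nonneg: "0 \<le> Qfun u"
  unfolding Qfun_def set_lebesgue_integral_def
  by (intro Bochner_Integration.integral_nonneg)
    (simp add: std_phi_pos less_imp_le split: split_indicator)

lemma Qfun_ge_std_phi: "std_phi (\<bar>u\<bar> + 1) \<le> Qfun u"
proof -
  have "std_phi (\<bar>u\<bar> + 1) = (LBINT t:{u..u + 1}. std_phi (\<bar>u\<bar> + 1))"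
    by (simp add: set_integral_const)
  also have "\<dots> \<le> (LBINT t:{u..u + 1}. std_phi t)"
    by (intro set_integral_mono std_phi_antimono set_integrable_std_phi)
      (auto simp: set_integrable_def)
  also have "\<dots> = Qfun u - Qfun (u + 1)"
    using Qfun_split[of u "u + 1"] by (simp add: interval_integral_Icc)
  also have "\<dots> \<le> Qfun u"
    using Qfun_nonneg[of "u + 1"] by simp
  finally show ?thesis .
qed

lemma Qfun_pos: "0 < Qfun u"
  using Qfun_ge_std_phi[of u] std_phi_pos[of "\<bar>u\<bar> + 1"] by linarith

lemma Qfun_mult_Qfun_minus_ge: "std_phi (\<bar>s\<bar> + 1) / 2 \<le> Qfun s * Qfun (- s)"
proof (cases "1 / 2 \<le> Qfun s")
  case True
  have "1 / 2 * std_phi (\<bar>s\<bar> + 1) \<le> Qfun s * Qfun (- s)"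
    using True Qfun_ge_std_phi[of "- s"]
    by (intro mult_mono) (auto simp: Qfun_pos std_phi_pos less_imp_le)
  then show ?thesis
    by simp
next
  case False
  then have "1 / 2 \<le> Qfun (- s)"
    by (simp add: Qfun_minus)
  then have "std_phi (\<bar>s\<bar> + 1) * (1 / 2) \<le> Qfun s * Qfun (- s)"
    using Qfun_ge_std_phi[of s]
    by (intro mult_mono) (auto simp: Qfun_nonneg std_phi_pos less_imp_le)
  then show ?thesis
    by simp
qed

lemma xi_eq: "xi s = (std_phi s)\<^sup>2 / (Qfun s * Qfun (- s))"
  by (simp add: xi_def Qfun_minus)

lemma xi_nonneg: "0 \<le> xi s"
  using Qfun_pos[of s] Qfun_pos[of "- s"] by (simp add: xi_eq)

lemma xi_measurable [measurable]: "xi \<in> borel_measurable borel"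
  unfolding xi_def[abs_def] by measurable

lemma std_phi_sq_le: "2 * (std_phi s)\<^sup>2 \<le> exp 1 * std_phi (\<bar>s\<bar> + 1)"
proof -
  let ?P = "sqrt (2 * pi)"
  have P: "2 \<le> ?P"
    using pi_gt3 real_sqrt_le_mono[of 4 "2 * pi"] by simp
  have "(\<bar>s\<bar> + 1)\<^sup>2 = s\<^sup>2 + 2 * \<bar>s\<bar> + 1"
    by (simp add: power2_sum)
  moreover have "2 * \<bar>s\<bar> \<le> s\<^sup>2 + 1"
    using zero_le_power2[of "\<bar>s\<bar> - 1"] by (simp add: power2_diff)
  ultimately have "- s\<^sup>2 / 2 + - s\<^sup>2 / 2 \<le> 1 + - (\<bar>s\<bar> + 1)\<^sup>2 / 2"
    by linarith
  then have E: "(exp (- s\<^sup>2 / 2))\<^sup>2 \<le> exp 1 * exp (- (\<bar>s\<bar> + 1)\<^sup>2 / 2)"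
    unfolding power2_eq_square[of "exp _"] exp_add[symmetric] by (rule exp_mono)
  have "2 * (std_phi s)\<^sup>2 = 2 * (exp (- s\<^sup>2 / 2))\<^sup>2 / ?P\<^sup>2"
    by (simp add: std_phi_def power_divide)
  also have "\<dots> \<le> 2 * (exp 1 * exp (- (\<bar>s\<bar> + 1)\<^sup>2 / 2)) / ?P\<^sup>2"
    using E by (intro divide_right_mono mult_left_mono) auto
  also have "\<dots> \<le> ?P * (exp 1 * exp (- (\<bar>s\<bar> + 1)\<^sup>2 / 2)) / ?P\<^sup>2"
    using P by (intro divide_right_mono mult_right_mono) auto
  also have "\<dots> = exp 1 * std_phi (\<bar>s\<bar> + 1)"
    by (simp add: std_phi_def power2_eq_square field_simps)
  finally show ?thesis .
qed

lemma xi_le_exp_1: "xi s \<le> exp 1"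
proof -
  have "xi s \<le> (std_phi s)\<^sup>2 / (std_phi (\<bar>s\<bar> + 1) / 2)"
    unfolding xi_eq using Qfun_mult_Qfun_minus_ge[of s] std_phi_pos[of "\<bar>s\<bar> + 1"]
    by (intro divide_left_mono) auto
  also have "\<dots> \<le> exp 1"
    using std_phi_sq_le[of s] std_phi_pos[of "\<bar>s\<bar> + 1"] by (simp add: field_simps)
  finally show ?thesis .
qed

lemma integrable_std_phi_moment_bounded:
  assumes [measurable]: "w \<in> borel_measurable borel" and bound: "\<And>s. \<bar>w s\<bar> \<le> B"
  shows "integrable lborel (\<lambda>s. std_phi s * s ^ n * w s)"
proof (rule Bochner_Integration.integrable_bound)
  show "integrable lborel (\<lambda>s. B * (std_phi s * \<bar>s\<bar> ^ n))"
    using integrable_std_normal_moment_abs[of n]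
    by (simp add: std_phi_eq_std_normal_density)
  have "norm (std_phi s * s ^ n * w s) \<le> norm (B * (std_phi s * \<bar>s\<bar> ^ n))" for s
  proof -
    have "norm (std_phi s * s ^ n * w s) = std_phi s * \<bar>s\<bar> ^ n * \<bar>w s\<bar>"
      using std_phi_pos[of s] by (simp add: abs_mult power_abs)
    also have "\<dots> \<le> std_phi s * \<bar>s\<bar> ^ n * \<bar>B\<bar>"
      using bound[of s] std_phi_pos[of s] by (intro mult_left_mono) auto
    finally show ?thesis
      using std_phi_pos[of s] by (simp add: abs_mult mult.commute)
  qed
  then show "AE s in lborel. norm (std_phi s * s ^ n * w s) \<le> norm (B * (std_phi s * \<bar>s\<bar> ^ n))"
    by simp
qed simp

lemma integral_std_phi_mult_self: "(LINT s|lborel. std_phi s * s) = 0"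
  using integral_std_normal_moment_odd[of 0] by (simp add: std_phi_eq_std_normal_density)

lemma integral_std_phi_mult_square: "(LINT s|lborel. std_phi s * s\<^sup>2) = 1"
  using integral_std_normal_moment_even[of 1] by (simp add: std_phi_eq_std_normal_density)

lemma zeta_0_eq: "zeta 0 c = (LINT s|lborel. std_phi s * xi (c * s))"
  by (simp add: zeta_def)

lemma zeta_2_eq: "zeta 2 c = (LINT s|lborel. std_phi s * s\<^sup>2 * xi (c * s))"
  by (simp add: zeta_def)

section \<open>The Fisher matrix as a Gaussian integral\<close>

definition gauss_density :: "real^'n \<Rightarrow> real" where
  "gauss_density h = (\<Prod>i\<in>UNIV. std_phi (h $ i))"

lemma gauss_density_pos: "0 < gauss_density h"
  unfolding gauss_density_def by (intro prod_pos) (auto simp: std_phi_pos)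

lemma gauss_density_measurable [measurable]: "gauss_density \<in> borel_measurable borel"
  unfolding gauss_density_def[abs_def] by measurable

lemma gauss_density_eq_norm:
  "gauss_density (h :: real^'n) = exp (- (norm h)\<^sup>2 / 2) / sqrt (2 * pi) ^ CARD('n)"
proof -
  have "gauss_density h = (\<Prod>i\<in>UNIV. exp (- (h $ i)\<^sup>2 / 2)) / (\<Prod>i\<in>(UNIV::'n set). sqrt (2 * pi))"
    unfolding gauss_density_def std_phi_def by (rule prod_dividef)
  also have "(\<Prod>i\<in>UNIV. exp (- (h $ i)\<^sup>2 / 2)) = exp (\<Sum>i\<in>UNIV. - (h $ i)\<^sup>2 / 2)"
    by (simp add: exp_sum)
  also have "(\<Sum>i\<in>UNIV. - (h $ i)\<^sup>2 / 2) = - (\<Sum>i\<in>UNIV. h $ i * h $ i) / 2"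
    by (simp add: sum_divide_distrib sum_negf power2_eq_square)
  also have "(\<Sum>i\<in>UNIV. h $ i * h $ i) = (norm h)\<^sup>2"
    by (simp add: power2_norm_eq_inner inner_vec_def)
  finally show ?thesis
    by simp
qed

lemma score_eq:
  "score x y h i = y * h $ i * std_phi (- y * (h \<bullet> x)) / Qfun (- y * (h \<bullet> x))"
proof -
  define P where "P = gauss_density h"
  have P: "0 < P"
    by (simp add: P_def gauss_density_pos)
  have "(\<lambda>t. ln (dens (x + t *\<^sub>R axis i 1) y h)) = (\<lambda>t. ln (P * Qfun (- y * (h \<bullet> x + t * h $ i))))"
    by (simp add: dens_def P_def gauss_density_def inner_add_right inner_axis)
  moreover have "deriv (\<lambda>t. ln (P * Qfun (- y * (h \<bullet> x + t * h $ i)))) 0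
      = P * (- std_phi (- y * (h \<bullet> x + 0 * h $ i)) * (- y * (0 + 1 * h $ i)))
        / (P * Qfun (- y * (h \<bullet> x + 0 * h $ i)))"
    by (rule DERIV_imp_deriv) (rule derivative_eq_intros refl | simp add: P Qfun_pos)+
  ultimately show ?thesis
    unfolding score_def using P by simp
qed

lemma fisher_integrand_eq:
  "(\<Sum>y\<in>{-1, 1::real}. dens x y h * score x y h i * score x y h j) =
     gauss_density h * xi (h \<bullet> x) * h $ i * h $ j"
proof -
  define s where "s = h \<bullet> x"
  have Q: "0 < Qfun s" "0 < Qfun (- s)"
    by (simp_all add: Qfun_pos)
  have "(\<Sum>y\<in>{-1, 1::real}. dens x y h * score x y h i * score x y h j)
     = gauss_density h * h $ i * h $ j * (std_phi s)\<^sup>2 * (1 / Qfun s + 1 / Qfun (- s))"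
    using Q by (simp add: score_eq dens_def gauss_density_def s_def field_simps power2_eq_square)
  also have "1 / Qfun s + 1 / Qfun (- s) = 1 / (Qfun s * Qfun (- s))"
    using Q Qfun_minus[of s] by (simp add: field_simps)
  finally show ?thesis
    unfolding xi_eq s_def by (simp add: field_simps)
qed

lemma fisher_eq_integral:
  "fisher x $ i $ j = (LINT h|lborel. gauss_density h * xi (h \<bullet> x) * h $ i * h $ j)"
  unfolding fisher_def by (simp add: fisher_integrand_eq)

section \<open>Lebesgue measure on \<open>real^'n\<close> as a product measure\<close>

lemma vec_lambda_measurable [measurable]:
  "vec_lambda \<in> measurable (Pi\<^sub>M UNIV (\<lambda>_::'n::finite. lborel)) (borel :: (real^'n) measure)"
proof (subst borel_measurable_euclidean_space, intro ballI)
  fix b :: "real^'n"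
  assume "b \<in> Basis"
  then obtain j where "b = axis j 1"
    by (auto simp: Basis_vec_def)
  then show "(\<lambda>\<omega>. vec_lambda \<omega> \<bullet> b) \<in> borel_measurable (Pi\<^sub>M UNIV (\<lambda>_. lborel))"
    by (simp add: inner_axis)
qed

lemma lborel_eq_distr_vec_lambda:
  "(lborel :: (real^'n::finite) measure) = distr (Pi\<^sub>M UNIV (\<lambda>_. lborel)) borel vec_lambda"
proof (rule lborel_eqI)
  interpret product_sigma_finite "\<lambda>_::'n. lborel"
    by (simp add: product_sigma_finite_def lborel.sigma_finite_measure_axioms)
  fix l u :: "real^'n"
  assume le_Basis: "\<And>b. b \<in> Basis \<Longrightarrow> l \<bullet> b \<le> u \<bullet> b"
  have le: "l $ i \<le> u $ i" for i
    using le_Basis[of "axis i 1"] by (auto simp: Basis_vec_def inner_axis)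
  have "vec_lambda -` box l u \<inter> space (Pi\<^sub>M UNIV (\<lambda>_. lborel)) = Pi\<^sub>E UNIV (\<lambda>i. {l $ i <..< u $ i})"
    by (auto simp: mem_box_cart space_PiM PiE_def Pi_def extensional_def)
  then have "emeasure (distr (Pi\<^sub>M UNIV (\<lambda>_. lborel)) borel vec_lambda) (box l u)
      = (\<Prod>i\<in>UNIV. emeasure lborel {l $ i <..< u $ i})"
    by (simp add: emeasure_distr emeasure_PiM)
  also have "\<dots> = ennreal (\<Prod>i\<in>UNIV. u $ i - l $ i)"
    using le by (simp add: prod_ennreal)
  also have "(\<Prod>i\<in>UNIV. u $ i - l $ i) = (\<Prod>b\<in>Basis. (u - l) \<bullet> b)"
    by (simp add: Basis_vec_def cart_eq_inner_axis axis_eq_axis prod.UNION_disjoint inner_diff_left)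
  finally show "emeasure (distr (Pi\<^sub>M UNIV (\<lambda>_. lborel)) borel vec_lambda) (box l u)
      = (\<Prod>b\<in>Basis. (u - l) \<bullet> b)" .
qed simp

lemma
  fixes F :: "'n::finite \<Rightarrow> real \<Rightarrow> real"
  assumes "\<And>m. integrable lborel (F m)"
  shows integrable_prod_vec_nth: "integrable lborel (\<lambda>h::real^'n. \<Prod>m\<in>UNIV. F m (h $ m))"
    and integral_prod_vec_nth:
      "(LINT h|lborel. (\<Prod>m\<in>UNIV. F m (h $ m))) = (\<Prod>m\<in>UNIV. LINT s|lborel. F m s)"
proof -
  interpret product_sigma_finite "\<lambda>_::'n. lborel"
    by (simp add: product_sigma_finite_def lborel.sigma_finite_measure_axioms)
  have [measurable]: "F m \<in> borel_measurable borel" for m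
    using assms[of m] by (simp add: borel_measurable_integrable)
  have meas: "(\<lambda>h::real^'n. \<Prod>m\<in>UNIV. F m (h $ m)) \<in> borel_measurable borel"
    by measurable
  have "integrable (Pi\<^sub>M UNIV (\<lambda>_. lborel)) (\<lambda>\<omega>. \<Prod>m\<in>UNIV. F m (\<omega> m))"
    by (rule product_integrable_prod) (auto simp: assms)
  then show "integrable lborel (\<lambda>h::real^'n. \<Prod>m\<in>UNIV. F m (h $ m))"
    by (subst lborel_eq_distr_vec_lambda, subst integrable_distr_eq[OF _ meas]) simp_all
  have "(LINT h|lborel. (\<Prod>m\<in>UNIV. F m (h $ m)))
      = (LINT \<omega>|Pi\<^sub>M UNIV (\<lambda>_. lborel). (\<Prod>m\<in>UNIV. F m (\<omega> m)))"
    by (subst lborel_eq_distr_vec_lambda, subst integral_distr[OF _ meas]) simp_all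
  also have "\<dots> = (\<Prod>m\<in>UNIV. LINT s|lborel. F m s)"
    by (rule product_integral_prod) (auto simp: assms)
  finally show "(LINT h|lborel. (\<Prod>m\<in>UNIV. F m (h $ m))) = (\<Prod>m\<in>UNIV. LINT s|lborel. F m s)" .
qed

section \<open>Rotations preserving Lebesgue measure\<close>

definition lborel_preserving :: "('a::euclidean_space \<Rightarrow> 'a) \<Rightarrow> bool" where
  "lborel_preserving f \<longleftrightarrow> f \<in> borel_measurable borel \<and> distr lborel borel f = lborel"

lemma lborel_preserving_id: "lborel_preserving (\<lambda>x. x)"
  by (simp add: lborel_preserving_def distr_id2)

lemma lborel_preserving_comp:
  assumes "lborel_preserving f" "lborel_preserving g"
  shows "lborel_preserving (g \<circ> f)"
proof -
  have [measurable]: "f \<in> borel_measurable borel" "g \<in> borel_measurable borel"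
    using assms by (simp_all add: lborel_preserving_def)
  have "distr lborel borel (g \<circ> f) = distr (distr lborel borel f) borel g"
    by (simp add: distr_distr)
  then show ?thesis
    using assms by (simp add: lborel_preserving_def)
qed

definition coordinate_shear :: "'n::finite \<Rightarrow> real \<Rightarrow> real^'n \<Rightarrow> real^'n \<Rightarrow> real^'n" where
  "coordinate_shear p \<sigma> w h = (\<chi> i. if i = p then \<sigma> * h $ p + w \<bullet> h else h $ i)"

lemma linear_coordinate_shear: "linear (coordinate_shear p \<sigma> w)"
  by (rule linearI) (auto simp: coordinate_shear_def vec_eq_iff algebra_simps)

lemma coordinate_shear_measurable [measurable]:
  "coordinate_shear p \<sigma> w \<in> borel_measurable borel"
  using linear_coordinate_shear
  by (intro borel_measurable_continuous_onI linear_continuous_on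
      linear_conv_bounded_linear[THEN iffD1])

lemma coordinate_shear_axis:
  fixes h :: "real^'n::finite"
  shows "coordinate_shear p \<sigma> (t *\<^sub>R axis q 1) h
    = (\<chi> i. if i = p then \<sigma> * h $ p + t * h $ q else h $ i)"
  by (simp add: coordinate_shear_def inner_axis' cong: if_cong)

lemma coordinate_shear_vec_lambda_upd:
  assumes "w $ p = 0"
  shows "coordinate_shear p \<sigma> w (vec_lambda (fun_upd \<omega> p y))
    = vec_lambda (fun_upd \<omega> p (\<sigma> * y + w \<bullet> vec_lambda \<omega>))"
proof -
  have "w \<bullet> vec_lambda (fun_upd \<omega> p y) = w \<bullet> vec_lambda \<omega>"
    unfolding inner_vec_def using assms by (intro sum.cong) auto
  then show ?thesis
    by (simp add: coordinate_shear_def vec_eq_iff)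
qed

lemma nn_integral_coordinate_shear:
  fixes p :: "'n::finite"
  assumes \<sigma>: "\<bar>\<sigma>\<bar> = 1" and w: "w $ p = 0" and [measurable]: "f \<in> borel_measurable borel"
  shows "(\<integral>\<^sup>+h. f (coordinate_shear p \<sigma> w h) \<partial>lborel) = (\<integral>\<^sup>+h. f h \<partial>lborel)"
proof -
  interpret product_sigma_finite "\<lambda>_::'n. lborel"
    by (simp add: product_sigma_finite_def lborel.sigma_finite_measure_axioms)
  define J where "J = UNIV - {p}"
  have U: "insert p J = UNIV" "p \<notin> J" "finite J"
    by (auto simp: J_def)
  have [measurable]:
    "vec_lambda \<in> borel_measurable (Pi\<^sub>M (insert p J) (\<lambda>_. lborel :: real measure))"
    unfolding U by (rule vec_lambda_measurable)
  have nn_integral_vec_lambda: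
    "(\<integral>\<^sup>+h. g h \<partial>lborel)
      = (\<integral>\<^sup>+\<omega>. (\<integral>\<^sup>+y. g (vec_lambda (fun_upd \<omega> p y)) \<partial>lborel) \<partial>Pi\<^sub>M J (\<lambda>_. lborel))"
    if [measurable]: "g \<in> borel_measurable borel" for g :: "real^'n \<Rightarrow> ennreal"
  proof -
    have "(\<integral>\<^sup>+h. g h \<partial>lborel) = (\<integral>\<^sup>+\<omega>. g (vec_lambda \<omega>) \<partial>Pi\<^sub>M (insert p J) (\<lambda>_. lborel))"
      unfolding U(1) by (subst lborel_eq_distr_vec_lambda) (simp add: nn_integral_distr)
    then show ?thesis
      by (simp add: product_nn_integral_insert[OF U(3) U(2)])
  qed
  have "vec_lambda (fun_upd \<omega> p y) = vec_lambda \<omega> + (y - \<omega> p) *\<^sub>R axis p 1" for \<omega> y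
    by (simp add: vec_eq_iff axis_def)
  then have "(\<lambda>y. f (vec_lambda (fun_upd \<omega> p y))) \<in> borel_measurable borel" for \<omega>
    by simp
  moreover have "\<sigma> \<noteq> 0"
    using \<sigma> by auto
  \<comment> \<open>in the \<open>p\<close>-th coordinate the shear is \<open>y \<mapsto> \<sigma> y + w \<bullet> h\<close>, where \<open>w \<bullet> h\<close>
      does not depend on \<open>y\<close> because \<open>w $ p = 0\<close>\<close>
  ultimately have "(\<integral>\<^sup>+y. f (vec_lambda (fun_upd \<omega> p (\<sigma> * y + c))) \<partial>lborel)
      = (\<integral>\<^sup>+y. f (vec_lambda (fun_upd \<omega> p y)) \<partial>lborel)" for \<omega> c
    using nn_integral_real_affine[of "\<lambda>y. f (vec_lambda (fun_upd \<omega> p y))" \<sigma> c] \<sigma>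
    by (simp add: add.commute)
  then show ?thesis
    by (simp add: nn_integral_vec_lambda coordinate_shear_vec_lambda_upd[OF w])
qed

lemma lborel_preserving_coordinate_shear:
  fixes p :: "'n::finite"
  assumes "\<bar>\<sigma>\<bar> = 1" "w $ p = 0"
  shows "lborel_preserving (coordinate_shear p \<sigma> w)"
  unfolding lborel_preserving_def
proof (intro conjI coordinate_shear_measurable measure_eqI)
  fix A :: "(real^'n) set"
  assume "A \<in> sets (distr lborel borel (coordinate_shear p \<sigma> w))"
  then have [measurable]: "A \<in> sets borel"
    by simp
  have "emeasure (distr lborel borel (coordinate_shear p \<sigma> w)) A
      = emeasure lborel (coordinate_shear p \<sigma> w -` A)"
    by (simp add: emeasure_distr)
  also have "\<dots> = (\<integral>\<^sup>+h. indicator A (coordinate_shear p \<sigma> w h) \<partial>lborel)"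
    using measurable_sets_borel[OF coordinate_shear_measurable \<open>A \<in> sets borel\<close>]
    by (simp flip: nn_integral_indicator add: indicator_vimage)
  also have "\<dots> = emeasure lborel A"
    by (simp add: nn_integral_coordinate_shear[OF assms])
  finally show "emeasure (distr lborel borel (coordinate_shear p \<sigma> w)) A = emeasure lborel A" .
qed simp

definition givens :: "'n::finite \<Rightarrow> 'n \<Rightarrow> real \<Rightarrow> real \<Rightarrow> real^'n \<Rightarrow> real^'n" where
  "givens p q c s h = (\<chi> i. if i = p then c * h $ p - s * h $ q
                            else if i = q then s * h $ p + c * h $ q else h $ i)"

lemma givens_eq_shears:
  fixes p q :: "'n::finite"
  assumes pq: "p \<noteq> q" and s: "s \<noteq> 0" and cs: "c\<^sup>2 + s\<^sup>2 = 1"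
  defines "T1 \<equiv> coordinate_shear p 1 (((c - 1) / s) *\<^sub>R axis q 1)"
    and "T2 \<equiv> coordinate_shear q 1 (s *\<^sub>R axis p 1)"
  shows "givens p q c s = T1 \<circ> T2 \<circ> T1"
proof
  fix h :: "real^'n"
  define \<alpha> where "\<alpha> = (c - 1) / s"
  have \<alpha>1: "1 + \<alpha> * s = c"
    using s by (simp add: \<alpha>_def field_simps)
  have "\<alpha> * (2 + \<alpha> * s) = (c\<^sup>2 - 1) / s"
    using s by (simp add: \<alpha>_def field_simps power2_eq_square)
  also have "\<dots> = - s"
    using s cs by (simp add: field_simps power2_eq_square)
  finally have \<alpha>2: "\<alpha> * (2 + \<alpha> * s) = - s" .
  have "(T1 \<circ> T2 \<circ> T1) h $ p = (1 + \<alpha> * s) * h $ p + \<alpha> * (2 + \<alpha> * s) * h $ q"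
    using pq by (simp add: T1_def T2_def coordinate_shear_axis \<alpha>_def[symmetric] algebra_simps)
  moreover have "(T1 \<circ> T2 \<circ> T1) h $ q = s * h $ p + (1 + \<alpha> * s) * h $ q"
    using pq by (simp add: T1_def T2_def coordinate_shear_axis \<alpha>_def[symmetric] algebra_simps)
  ultimately show "givens p q c s h = (T1 \<circ> T2 \<circ> T1) h"
    using pq by (auto simp: vec_eq_iff givens_def T1_def T2_def coordinate_shear_axis \<alpha>1 \<alpha>2)
qed

lemma lborel_preserving_givens:
  assumes "p \<noteq> q" "s \<noteq> 0" "c\<^sup>2 + s\<^sup>2 = 1"
  shows "lborel_preserving (givens p q c s)"
  unfolding givens_eq_shears[OF assms]
  using assms(1)
  by (intro lborel_preserving_comp lborel_preserving_coordinate_shear) (auto simp: axis_def)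

lemma orthogonal_transformation_coordinatewise:
  fixes f :: "real^'n::finite \<Rightarrow> real^'n"
  assumes "linear f"
    and "\<And>h i. i \<notin> S \<Longrightarrow> f h $ i = h $ i"
    and "\<And>h. (\<Sum>i\<in>S. (f h $ i)\<^sup>2) = (\<Sum>i\<in>S. (h $ i)\<^sup>2)"
  shows "orthogonal_transformation f"
  unfolding orthogonal_transformation
proof (intro conjI allI \<open>linear f\<close>)
  have norm_split: "(norm v)\<^sup>2 = (\<Sum>i\<in>S. (v $ i)\<^sup>2) + (\<Sum>i\<in>- S. (v $ i)\<^sup>2)" for v :: "real^'n"
  proof -
    have "(norm v)\<^sup>2 = (\<Sum>i\<in>UNIV. (v $ i)\<^sup>2)"
      unfolding dot_square_norm[symmetric] inner_vec_def by (simp add: power2_eq_square)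
    then show ?thesis
      using sum.Int_Diff[of UNIV "\<lambda>i. (v $ i)\<^sup>2" S] by (simp add: Compl_eq_Diff_UNIV)
  qed
  fix v :: "real^'n"
  have "(norm (f v))\<^sup>2 = (norm v)\<^sup>2"
    unfolding norm_split using assms(2,3) by simp
  then show "norm (f v) = norm v"
    by simp
qed

lemma orthogonal_transformation_givens:
  fixes p q :: "'n::finite"
  assumes "p \<noteq> q" "c\<^sup>2 + s\<^sup>2 = 1"
  shows "orthogonal_transformation (givens p q c s)"
proof (rule orthogonal_transformation_coordinatewise[where S = "{p, q}"])
  show "linear (givens p q c s)"
    by (rule linearI) (auto simp: givens_def vec_eq_iff algebra_simps)
  fix h :: "real^'n"
  have "(c * h $ p - s * h $ q)\<^sup>2 + (s * h $ p + c * h $ q)\<^sup>2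
      = (c\<^sup>2 + s\<^sup>2) * ((h $ p)\<^sup>2 + (h $ q)\<^sup>2)"
    by (simp add: power2_eq_square algebra_simps)
  then show "(\<Sum>i\<in>{p, q}. (givens p q c s h $ i)\<^sup>2) = (\<Sum>i\<in>{p, q}. (h $ i)\<^sup>2)"
    using assms by (simp add: givens_def)
qed (auto simp: givens_def)

lemma orthogonal_transformation_coordinate_shear_0:
  assumes "\<bar>\<sigma>\<bar> = 1"
  shows "orthogonal_transformation (coordinate_shear p \<sigma> 0)"
proof (rule orthogonal_transformation_coordinatewise[where S = "{p}"])
  have "\<sigma>\<^sup>2 = 1"
    using power2_abs[of \<sigma>] assms by simp
  then show "(\<Sum>i\<in>{p}. (coordinate_shear p \<sigma> 0 h $ i)\<^sup>2) = (\<Sum>i\<in>{p}. (h $ i)\<^sup>2)" for h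
    by (simp add: coordinate_shear_def power_mult_distrib)
qed (auto simp: linear_coordinate_shear coordinate_shear_def)

lemma lborel_preserving_rotation_rightward_line_axis:
  fixes x :: "real^'n::finite"
  assumes "\<And>i. i \<noteq> k \<Longrightarrow> x $ i = 0"
  shows "\<exists>f. orthogonal_transformation f \<and> lborel_preserving f \<and> f (norm x *\<^sub>R axis k 1) = x"
proof -
  define \<sigma> where "\<sigma> = (if x $ k < 0 then - 1 else 1 :: real)"
  have x: "x = x $ k *\<^sub>R axis k 1"
    using assms by (auto simp: vec_eq_iff axis_def)
  have "norm x = norm (x $ k *\<^sub>R axis k (1::real))"
    by (rule arg_cong[OF x])
  then have "norm x = \<bar>x $ k\<bar>"
    by simp
  then have "coordinate_shear k \<sigma> 0 (norm x *\<^sub>R axis k 1) = x"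
    by (subst (2) x) (simp add: \<sigma>_def coordinate_shear_def vec_eq_iff axis_def abs_if)
  moreover have "\<bar>\<sigma>\<bar> = 1"
    by (simp add: \<sigma>_def)
  ultimately show ?thesis
    using orthogonal_transformation_coordinate_shear_0
      lborel_preserving_coordinate_shear[where w = 0]
    by (intro exI[of _ "coordinate_shear k \<sigma> 0"]) auto
qed

lemma givens_clear_coordinate:
  fixes x :: "real^'n::finite"
  assumes jk: "j \<noteq> k" and xj: "x $ j \<noteq> 0"
  obtains G where "orthogonal_transformation G" "lborel_preserving G"
    "G (\<chi> i. if i = k then sqrt ((x $ k)\<^sup>2 + (x $ j)\<^sup>2) else if i = j then 0 else x $ i) = x"
proof -
  define \<rho> where "\<rho> = sqrt ((x $ k)\<^sup>2 + (x $ j)\<^sup>2)"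
  have \<rho>: "0 < \<rho>"
    using xj by (simp add: \<rho>_def add_nonneg_pos)
  have cs: "(x $ k / \<rho>)\<^sup>2 + (x $ j / \<rho>)\<^sup>2 = 1"
    using \<rho> xj by (simp add: \<rho>_def power_divide add_divide_distrib[symmetric])
  have "x $ j / \<rho> \<noteq> 0"
    using xj \<rho> by simp
  then have "orthogonal_transformation (givens k j (x $ k / \<rho>) (x $ j / \<rho>))"
    "lborel_preserving (givens k j (x $ k / \<rho>) (x $ j / \<rho>))"
    using jk[symmetric] cs
    by (auto intro: orthogonal_transformation_givens lborel_preserving_givens)
  moreover have "givens k j (x $ k / \<rho>) (x $ j / \<rho>)
      (\<chi> i. if i = k then \<rho> else if i = j then 0 else x $ i) = x"
    using jk \<rho> by (auto simp: givens_def vec_eq_iff)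
  ultimately show ?thesis
    using that unfolding \<rho>_def by blast
qed

lemma lborel_preserving_rotation_rightward_line_supported:
  fixes x :: "real^'n::finite"
  assumes "finite K" "k \<notin> K" "\<And>i. i \<notin> K \<Longrightarrow> i \<noteq> k \<Longrightarrow> x $ i = 0"
  shows "\<exists>f. orthogonal_transformation f \<and> lborel_preserving f \<and> f (norm x *\<^sub>R axis k 1) = x"
  using assms
proof (induction K arbitrary: x rule: finite_induct)
  case empty
  then show ?case
    by (intro lborel_preserving_rotation_rightward_line_axis) auto
next
  case (insert j K)
  have jk: "j \<noteq> k" "k \<notin> K"
    using insert.prems(1) by auto
  show ?case
  proof (cases "x $ j = 0")
    case True
    have "x $ i = 0" if "i \<notin> K" "i \<noteq> k" for i
      using insert.prems(2)[of i] True that by (cases "i = j") auto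
    then show ?thesis
      by (rule insert.IH[OF jk(2)])
  next
    case False
    define x' where
      "x' = (\<chi> i. if i = k then sqrt ((x $ k)\<^sup>2 + (x $ j)\<^sup>2) else if i = j then 0 else x $ i)"
    obtain G where G: "orthogonal_transformation G" "lborel_preserving G" "G x' = x"
      using givens_clear_coordinate[OF jk(1) False] unfolding x'_def by blast
    have "x' $ i = 0" if "i \<notin> K" "i \<noteq> k" for i
      using insert.prems(2)[of i] that by (auto simp: x'_def)
    then have "\<exists>f. orthogonal_transformation f \<and> lborel_preserving f
        \<and> f (norm x' *\<^sub>R axis k 1) = x'"
      by (rule insert.IH[OF jk(2)])
    then obtain f where f: "orthogonal_transformation f" "lborel_preserving f"
      "f (norm x' *\<^sub>R axis k 1) = x'"
      by blast
    have "norm x' = norm x"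
      using orthogonal_transformation_norm[OF G(1), of x'] G(3) by simp
    then have "(G \<circ> f) (norm x *\<^sub>R axis k 1) = x"
      using f(3) G(3) by simp
    moreover have "orthogonal_transformation (G \<circ> f)"
      by (rule orthogonal_transformation_compose[OF G(1) f(1)])
    moreover have "lborel_preserving (G \<circ> f)"
      by (rule lborel_preserving_comp[OF f(2) G(2)])
    ultimately show ?thesis
      by blast
  qed
qed

lemma lborel_preserving_rotation_rightward_line:
  fixes x :: "real^'n::finite" and k :: 'n
  obtains f where "orthogonal_transformation f" "lborel_preserving f" "f (norm x *\<^sub>R axis k 1) = x"
proof -
  have "\<exists>f. orthogonal_transformation f \<and> lborel_preserving f \<and> f (norm x *\<^sub>R axis k 1) = x"
    by (rule lborel_preserving_rotation_rightward_line_supported[of "UNIV - {k}"]) auto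
  then show ?thesis
    using that by blast
qed

section \<open>The Fisher matrix at a point of a coordinate axis\<close>

lemma prod_integral_axis_factors:
  fixes c :: real and k a b :: "'n::finite"
  shows "(\<Prod>m\<in>UNIV. LINT s|lborel.
            std_phi s * s ^ (of_bool (m = a) + of_bool (m = b)) * (if m = k then xi (c * s) else 1))
    = (if a = b then if a = k then zeta 2 c else zeta 0 c else 0)"
proof -
  define v where "v m = (LINT s|lborel.
    std_phi s * s ^ (of_bool (m = a) + of_bool (m = b)) * (if m = k then xi (c * s) else 1))" for m
  have v_other: "v m = (LINT s|lborel. std_phi s * s ^ (of_bool (m = a) + of_bool (m = b)))"
    if "m \<noteq> k" for m
    using that by (simp add: v_def)
  have "prod v UNIV = (if a = b then if a = k then zeta 2 c else zeta 0 c else 0)"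
  proof (cases "a = b")
    case True
    have "v m = 1" if "m \<noteq> k" for m
      using that True
      by (cases "m = a")
        (simp_all add: v_other integral_std_phi
          integral_std_phi_mult_square[unfolded power2_eq_square])
    then have "prod v UNIV = v k"
      by (subst prod.remove[of _ k]) (auto intro: prod.neutral)
    moreover have "v k = (if a = k then zeta 2 c else zeta 0 c)"
      using True by (simp add: v_def zeta_0_eq zeta_2_eq power2_eq_square)
    ultimately show ?thesis
      using True by simp
  next
    case False
    define d where "d = (if a = k then b else a)"
    have "d \<noteq> k" "of_bool (d = a) + of_bool (d = b) = (1 :: nat)"
      using False by (auto simp: d_def)
    then have "v d = 0"
      by (simp add: v_other integral_std_phi_mult_self)
    then show ?thesis
      using False by (auto intro: prod_zero)
  qed
  then show ?thesis
    unfolding v_def .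
qed

lemma integral_fisher_integrand_axis:
  fixes c :: real and k a b :: "'n::finite"
  shows "(LINT h|lborel. gauss_density h * xi (h \<bullet> (c *\<^sub>R axis k 1)) * h $ a * h $ b)
    = (if a = b then if a = k then zeta 2 c else zeta 0 c else 0)"
proof -
  define F where "F m s =
    std_phi s * s ^ (of_bool (m = a) + of_bool (m = b)) * (if m = k then xi (c * s) else 1)" for m s
  have F_integrable: "integrable lborel (F m)" for m
    unfolding F_def
    by (rule integrable_std_phi_moment_bounded[where B = "exp 1"])
      (auto simp: xi_nonneg xi_le_exp_1)
  have "x ^ of_bool P = (if P then x else 1)" for x :: real and P
    by simp
  then have integrand_eq_prod:
    "gauss_density h * xi (h \<bullet> (c *\<^sub>R axis k 1)) * h $ a * h $ b = (\<Prod>m\<in>UNIV. F m (h $ m))"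
    for h :: "real^'n"
    by (simp add: F_def gauss_density_def prod.distrib power_add inner_axis)
  show ?thesis
    unfolding integrand_eq_prod integral_prod_vec_nth[OF F_integrable]
    unfolding F_def by (rule prod_integral_axis_factors)
qed

lemma fisher_axis:
  "fisher (c *\<^sub>R axis k 1 :: real^'n) $ a $ b
    = (if a = b then if a = k then zeta 2 c else zeta 0 c else 0)"
  unfolding fisher_eq_integral by (rule integral_fisher_integrand_axis)

lemma det_fisher_axis:
  "det (fisher (c *\<^sub>R axis k 1 :: real^'n)) = zeta 0 c ^ (CARD('n) - 1) * zeta 2 c"
proof -
  have "det (fisher (c *\<^sub>R axis k 1 :: real^'n)) = (\<Prod>a\<in>UNIV. fisher (c *\<^sub>R axis k 1) $ a $ a)"
    by (rule det_diagonal) (simp add: fisher_axis)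
  also have "\<dots> = zeta 2 c * (\<Prod>a\<in>UNIV - {k}. zeta 0 c)"
    by (simp add: fisher_axis prod.remove[of _ k])
  finally show ?thesis
    by (simp add: card_Diff_singleton mult.commute)
qed

section \<open>Rotation invariance\<close>

lemma integrable_gauss_density_mult_nth:
  "integrable lborel (\<lambda>h::real^'n::finite. gauss_density h * h $ a * h $ b)"
proof -
  define F where "F m s = std_phi s * s ^ (of_bool (m = a) + of_bool (m = b))" for m s
  have F_integrable: "integrable lborel (F m)" for m
    unfolding F_def std_phi_eq_std_normal_density by (rule integrable_std_normal_moment)
  have "x ^ of_bool P = (if P then x else 1)" for x :: real and P
    by simp
  then have "gauss_density h * h $ a * h $ b = (\<Prod>m\<in>UNIV. F m (h $ m))" for h :: "real^'n"
    by (simp add: F_def gauss_density_def prod.distrib power_add)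
  then show ?thesis
    using integrable_prod_vec_nth[OF F_integrable] by simp
qed

lemma integrable_fisher_integrand:
  "integrable lborel (\<lambda>h::real^'n::finite. gauss_density h * xi (h \<bullet> x) * h $ a * h $ b)"
proof (rule Bochner_Integration.integrable_bound)
  show "integrable lborel (\<lambda>h. exp 1 * \<bar>gauss_density h * h $ a * h $ b\<bar>)"
    using integrable_gauss_density_mult_nth by (intro integrable_mult_right integrable_abs)
  have "\<bar>gauss_density h * xi (h \<bullet> x) * h $ a * h $ b\<bar>
      \<le> exp 1 * \<bar>gauss_density h * h $ a * h $ b\<bar>" for h :: "real^'n"
  proof -
    have "\<bar>gauss_density h * xi (h \<bullet> x) * h $ a * h $ b\<bar>
        = xi (h \<bullet> x) * \<bar>gauss_density h * h $ a * h $ b\<bar>"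
      by (simp add: abs_mult xi_nonneg)
    also have "\<dots> \<le> exp 1 * \<bar>gauss_density h * h $ a * h $ b\<bar>"
      by (intro mult_right_mono xi_le_exp_1) simp
    finally show ?thesis .
  qed
  then show "AE h in lborel. norm (gauss_density h * xi (h \<bullet> x) * h $ a * h $ b)
      \<le> norm (exp 1 * \<bar>gauss_density h * h $ a * h $ b\<bar>)"
    by simp
qed measurable

lemma fisher_orthogonal_transformation:
  assumes f: "orthogonal_transformation f" "lborel_preserving f"
  shows "fisher (f y) = matrix f ** fisher y ** transpose (matrix f)"
proof -
  let ?Q = "matrix f"
  have [measurable]: "f \<in> borel_measurable borel" and distr_f: "distr lborel borel f = lborel"
    using f(2) by (auto simp: lborel_preserving_def)
  have f_nth: "f h $ i = (\<Sum>a\<in>UNIV. ?Q $ i $ a * h $ a)" for h i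
  proof -
    have "f h = ?Q *v h"
      using fun_cong[OF matrix_vector_mul(2)[OF orthogonal_transformation_linear[OF f(1)]], of h]
      by simp
    then show ?thesis
      by (simp add: matrix_vector_mult_def)
  qed
  have f_gauss_density: "gauss_density (f h) = gauss_density h" for h
    using f(1) by (simp add: gauss_density_eq_norm orthogonal_transformation_norm)
  have f_inner: "f h \<bullet> f y = h \<bullet> y" for h
    using f(1) by (simp add: orthogonal_transformation_def)
  have "fisher (f y) $ i $ j = (\<Sum>a\<in>UNIV. \<Sum>b\<in>UNIV. ?Q $ i $ a * ?Q $ j $ b * fisher y $ a $ b)"
    for i j
  proof -
    have "fisher (f y) $ i $ j
        = (LINT h|distr lborel borel f. gauss_density h * xi (h \<bullet> f y) * h $ i * h $ j)"
      by (simp add: fisher_eq_integral distr_f)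
    also have "\<dots> = (LINT h|lborel. gauss_density (f h) * xi (f h \<bullet> f y) * f h $ i * f h $ j)"
      by (rule integral_distr) measurable
    also have "\<dots> = (LINT h|lborel. (\<Sum>a\<in>UNIV. \<Sum>b\<in>UNIV.
        ?Q $ i $ a * ?Q $ j $ b * (gauss_density h * xi (h \<bullet> y) * h $ a * h $ b)))"
      by (intro Bochner_Integration.integral_cong refl)
        (simp add: f_gauss_density f_inner f_nth sum_distrib_left sum_distrib_right algebra_simps)
    also have "\<dots> = (\<Sum>a\<in>UNIV. \<Sum>b\<in>UNIV. ?Q $ i $ a * ?Q $ j $ b * fisher y $ a $ b)"
      by (simp add: integrable_fisher_integrand fisher_eq_integral)
    finally show ?thesis .
  qed
  then show ?thesis
    by (simp add: vec_eq_iff matrix_matrix_mult_def transpose_def sum_distrib_left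
        sum_distrib_right algebra_simps) (subst sum.swap, simp add: algebra_simps)
qed

lemma det_fisher_orthogonal_transformation:
  assumes "orthogonal_transformation f" "lborel_preserving f"
  shows "det (fisher (f y)) = det (fisher y)"
proof -
  have "det (matrix f) * det (matrix f) = 1"
    using det_orthogonal_matrix[of "matrix f"] assms(1)
    by (auto simp: orthogonal_transformation_matrix)
  then show ?thesis
    by (simp add: fisher_orthogonal_transformation[OF assms] det_mul det_transpose)
qed

theorem lemma5:
  fixes x :: "real^'n"
  shows "det (fisher x) = zeta 0 (norm x) ^ (CARD('n) - 1) * zeta 2 (norm x)"
proof -
  obtain k :: 'n where True
    by blast
  obtain f where f: "orthogonal_transformation f" "lborel_preserving f"
    and x: "f (norm x *\<^sub>R axis k 1) = x"
    by (rule lborel_preserving_rotation_rightward_line)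
  have "det (fisher x) = det (fisher (norm x *\<^sub>R axis k 1))"
    using det_fisher_orthogonal_transformation[OF f, of "norm x *\<^sub>R axis k 1"] x by simp
  also have "\<dots> = zeta 0 (norm x) ^ (CARD('n) - 1) * zeta 2 (norm x)"
    by (rule det_fisher_axis)
  finally show ?thesis .
qed

end
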